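(* Let $\Lambda=(0,\infty)$ and let $\chi\colon\Lambda\to\mathbb{R}^3_+$ be continuous, bounded, with $\operatorname{supp}\chi=[0,1]$ and $\chi(\lambda)\ne\mathbf{0}$ on $(0,1)$; let $\eta=\chi/\langle\mathbf{1},\chi\rangle$ on $(0,1)$, extended continuously to $[0,1]$. Let $\mathcal{P}=\{\int\chi\,\mathrm{d}\nu:\nu$ finite nonnegative Borel measure on $\Lambda\}$ with nonempty interior, $A=\{\mathbf{x}\in\mathbb{R}^3:\langle\mathbf{x},\mathbf{1}\rangle=1\}$, $\mathcal{T}=\mathcal{P}\cap A$. If the spectral locus is convex, then for any $a<b$ in $[0,1]$, \[ \operatorname{conv}\bigl(\eta([a,b]_{\mathbb{T}})\bigr)\cap\operatorname{conv}\bigl(\eta([b,a]_{\mathbb{T}})\bigr)=[\eta(a),\eta(b)]. \]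
   Context: $[\mathbf{x},\mathbf{y}]$ denotes the closed segment between $\mathbf{x}$ and $\mathbf{y}$. $\mathcal{T}$ is regarded as a subset of the plane $A$ with its relative topology. Fix a direction and orientation in $A$; $\angle(\mathbf{c}',\mathbf{c})$ is the angle from $\mathbf{c}$ to $\mathbf{c}'$. A closed cyclic interval $[a,b]_{\mathbb{T}}\subset[0,1]$ is $[a,b]$ if $a\le b$ and $[a,1]\cup[0,b]$ if $a>b$. The spectral locus $\eta([0,1])$ is convex if $\eta([0,1])\subset\partial\mathcal{T}$ and for every $\mathbf{c}\in\operatorname{int}\mathcal{T}$ a continuous version of $\lambda\mapsto\angle(\eta(\lambda),\mathbf{c})$ is monotone on $[0,1]$ with $|\angle(\eta(0),\mathbf{c})-\angle(\eta(1),\mathbf{c})|\le 2\pi$. *)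

theory Defs
  imports "HOL-Analysis.Analysis"
begin

definition one3 :: "real^3" where "one3 = vec 1"

definition planeA :: "(real^3) set" where "planeA = {x. x \<bullet> one3 = 1}"

text \<open>Fixed orthonormal basis (direction and orientation) of the direction space of A.\<close>
definition e1 :: "real^3" where "e1 = (1 / sqrt 2) *\<^sub>R vector [1, -1, 0]"
definition e2 :: "real^3" where "e2 = (1 / sqrt 6) *\<^sub>R vector [1, 1, -2]"

definition spec_cone :: "(real \<Rightarrow> real^3) \<Rightarrow> (real^3) set" where
  "spec_cone chi = {(integral\<^sup>L \<nu> chi) | \<nu>.
       sets \<nu> = sets (restrict_space (borel :: real measure) {0<..}) \<and> finite_measure \<nu>}"

definition Tset :: "(real \<Rightarrow> real^3) \<Rightarrow> (real^3) set" where
  "Tset chi = spec_cone chi \<inter> planeA"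

text \<open>Convexity of the spectral locus eta([0,1]), with T carrying the relative topology of A.
  The angle of c' seen from c is encoded by a continuous lift theta.\<close>
definition convex_locus :: "(real \<Rightarrow> real^3) \<Rightarrow> (real^3) set \<Rightarrow> bool" where
  "convex_locus \<eta> T \<longleftrightarrow>
     \<eta> ` {0..1} \<subseteq> (subtopology euclidean planeA) frontier_of T \<and>
     (\<forall>c \<in> (subtopology euclidean planeA) interior_of T.
        \<exists>\<theta> :: real \<Rightarrow> real.
          continuous_on {0..1} \<theta> \<and>
          (\<forall>l\<in>{0..1}. \<eta> l - c = norm (\<eta> l - c) *\<^sub>R (cos (\<theta> l) *\<^sub>R e1 + sin (\<theta> l) *\<^sub>R e2)) \<and>
          ((\<forall>x\<in>{0..1}. \<forall>y\<in>{0..1}. x \<le> y \<longrightarrow> \<theta> x \<le> \<theta> y) \<or>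
           (\<forall>x\<in>{0..1}. \<forall>y\<in>{0..1}. x \<le> y \<longrightarrow> \<theta> y \<le> \<theta> x)) \<and>
          \<bar>\<theta> 0 - \<theta> 1\<bar> \<le> 2 * pi)"

definition cyc_interval :: "real \<Rightarrow> real \<Rightarrow> real set" where
  "cyc_interval a b = (if a \<le> b then {a..b} else {a..1} \<union> {0..b})"

end

(*
  Choose c in the relative interior of T off the segment [eta(a), eta(b)]; this is possible because
  T, the slice of the convex cone P by the plane A, is convex with nonempty interior relative to A.
  Seen from c, the arc eta([a,b]) sweeps the angles [theta(a), theta(b)] and the complementary arc
  sweeps [theta(b), theta(a) + 2 pi]; exchanging the arcs if necessary, the first angle is below pi.
  Write points as c + l (eta(a) - c) + m (eta(b) - c). A point of the first arc with l + m < 1, or a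
  point of the second arc with l + m > 1, would place a point of the locus strictly between c and a
  point of the closure of T, hence in the relative interior of T, whereas the locus lies on its
  relative frontier. So the first arc lies in the convex region l, m >= 0, l + m >= 1 and the second
  in the convex region l + m <= 1; these contain the two convex hulls and meet exactly in the segment.
*)

theory Submission
  imports Defs
begin

section \<open>Sums of finite measures\<close>

definition add_measure :: "'a measure \<Rightarrow> 'a measure \<Rightarrow> 'a measure" where
  "add_measure M N = measure_of (space M) (sets M) (\<lambda>A. emeasure M A + emeasure N A)"

lemma sets_add_measure [simp, measurable_cong]: "sets (add_measure M N) = sets M"
  by (simp add: add_measure_def)

lemma space_add_measure [simp]: "space (add_measure M N) = space M"
  by (simp add: add_measure_def)

lemma emeasure_add_measure:
  assumes "sets N = sets M"
  shows "emeasure (add_measure M N) A = emeasure M A + emeasure N A"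
proof (cases "A \<in> sets M")
  case True
  have "countably_additive (sets M) (\<lambda>A. emeasure M A + emeasure N A)"
    unfolding countably_additive_def
  proof safe
    fix F :: "nat \<Rightarrow> _" assume F: "range F \<subseteq> sets M" "disjoint_family F"
    then show "(\<Sum>i. emeasure M (F i) + emeasure N (F i)) = emeasure M (\<Union>(range F)) + emeasure N (\<Union>(range F))"
      using assms by (simp add: suminf_add[symmetric] suminf_emeasure)
  qed
  then show ?thesis
    unfolding add_measure_def using True
    by (subst emeasure_measure_of_sigma) (auto simp: positive_def sets.sigma_algebra_axioms)
next
  case False
  then show ?thesis using assms by (simp add: emeasure_notin_sets)
qed

lemma nn_integral_add_measure:
  assumes sets: "sets N = sets M" and f: "f \<in> borel_measurable M"
  shows "(\<integral>\<^sup>+x. f x \<partial>add_measure M N) = (\<integral>\<^sup>+x. f x \<partial>M) + (\<integral>\<^sup>+x. f x \<partial>N)"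
  using f
proof (induct rule: borel_measurable_induct)
  case (cong f g)
  have "space N = space M" using sets_eq_imp_space_eq[OF sets] .
  then have "integral\<^sup>N K f = integral\<^sup>N K g" if "space K = space M" for K
    using cong(3) that by (intro nn_integral_cong) simp
  then show ?case using cong(4) \<open>space N = space M\<close> by simp
next
  case (set A)
  then show ?case using sets by (simp add: emeasure_add_measure)
next
  case (mult u c)
  then show ?case using sets by (simp add: nn_integral_cmult distrib_left cong: measurable_cong_sets)
next
  case (add u v)
  then show ?case using sets by (simp add: nn_integral_add algebra_simps cong: measurable_cong_sets)
next
  case (seq U)
  have meas: "U i \<in> borel_measurable K" if "sets K = sets M" for K i
    using seq(1) that by (simp cong: measurable_cong_sets)
  have "incseq (\<lambda>i. integral\<^sup>N M (U i))" "incseq (\<lambda>i. integral\<^sup>N N (U i))"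
    using seq(4) by (auto intro!: nn_integral_mono simp: incseq_def le_fun_def)
  then have "(SUP i. integral\<^sup>N M (U i) + integral\<^sup>N N (U i))
      = (SUP i. integral\<^sup>N M (U i)) + (SUP i. integral\<^sup>N N (U i))"
    by (rule ennreal_SUP_add)
  then show ?case
    using seq(3) sets unfolding SUP_apply
    by (simp add: nn_integral_monotone_convergence_SUP[OF seq(4) meas])
qed

lemma finite_measure_add_measure:
  assumes "sets N = sets M" "finite_measure M" "finite_measure N"
  shows "finite_measure (add_measure M N)"
  using assms sets_eq_imp_space_eq[OF assms(1)]
  by (intro finite_measureI) (simp add: emeasure_add_measure finite_measure.emeasure_finite)

lemma integrable_add_measure:
  fixes f :: "'a \<Rightarrow> 'b::{banach, second_countable_topology}"
  assumes sets: "sets N = sets M" and "integrable M f" "integrable N f"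
  shows "integrable (add_measure M N) f"
proof -
  have "(\<lambda>x. ennreal (norm (f x))) \<in> borel_measurable M"
    using assms(2) by simp
  then show ?thesis
    using assms unfolding integrable_iff_bounded
    by (simp add: nn_integral_add_measure cong: measurable_cong_sets)
qed

lemma integrable_nn_integral_less_top:
  fixes f :: "'a \<Rightarrow> real"
  assumes "integrable M f"
  shows "(\<integral>\<^sup>+x. ennreal (f x) \<partial>M) < top"
proof -
  have "(\<integral>\<^sup>+x. ennreal (f x) \<partial>M) \<le> (\<integral>\<^sup>+x. ennreal (norm (f x)) \<partial>M)"
    by (intro nn_integral_mono) auto
  also have "\<dots> < top"
    using assms unfolding integrable_iff_bounded by (simp add: infinity_ennreal_def)
  finally show ?thesis .
qed

lemma integral_add_measure_real:
  fixes f :: "'a \<Rightarrow> real"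
  assumes sets: "sets N = sets M" and M: "integrable M f" and N: "integrable N f"
  shows "integral\<^sup>L (add_measure M N) f = integral\<^sup>L M f + integral\<^sup>L N f"
proof -
  have meas: "f \<in> borel_measurable M" using M by simp
  have fin: "(\<integral>\<^sup>+x. ennreal (f x) \<partial>K) < top" "(\<integral>\<^sup>+x. ennreal (- f x) \<partial>K) < top"
    if "integrable K f" for K
    using that integrable_nn_integral_less_top[of K f]
      integrable_nn_integral_less_top[of K "\<lambda>x. - f x"] by auto
  show ?thesis
    using integrable_add_measure[OF sets M N] M N sets meas
    by (simp add: real_lebesgue_integral_def nn_integral_add_measure enn2real_plus fin)
qed

lemma integral_add_measure:
  fixes f :: "'a \<Rightarrow> 'b::euclidean_space"
  assumes sets: "sets N = sets M" and M: "integrable M f" and N: "integrable N f"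
  shows "integral\<^sup>L (add_measure M N) f = integral\<^sup>L M f + integral\<^sup>L N f"
proof (rule euclidean_eqI)
  fix b :: 'b assume "b \<in> Basis"
  have "integral\<^sup>L (add_measure M N) f \<bullet> b = (\<integral>x. f x \<bullet> b \<partial>add_measure M N)"
    using integrable_add_measure[OF sets M N] by simp
  also have "\<dots> = (\<integral>x. f x \<bullet> b \<partial>M) + (\<integral>x. f x \<bullet> b \<partial>N)"
    using M N by (intro integral_add_measure_real[OF sets]) auto
  also have "\<dots> = (integral\<^sup>L M f + integral\<^sup>L N f) \<bullet> b"
    using M N by (simp add: inner_add_left)
  finally show "integral\<^sup>L (add_measure M N) f \<bullet> b = (integral\<^sup>L M f + integral\<^sup>L N f) \<bullet> b" .
qed

section \<open>The cone P and its slice T\<close>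

lemma integrable_spec_measure:
  fixes chi :: "real \<Rightarrow> real^3"
  assumes chi: "chi \<in> borel_measurable (restrict_space borel {0<..})" "bounded (chi ` {0<..})"
    and N: "sets N = sets (restrict_space borel {0<..})" "finite_measure N"
  shows "integrable N chi"
proof -
  have space: "space N = {0<..}"
    using sets_eq_imp_space_eq[OF N(1)] by (simp add: space_restrict_space)
  obtain B where "\<forall>l\<in>{0<..}. norm (chi l) \<le> B"
    using chi(2) unfolding bounded_iff by auto
  then show ?thesis
    using chi(1) N space
    by (intro finite_measure.integrable_const_bound[where B = B] AE_I2) (auto cong: measurable_cong_sets)
qed

lemma spec_cone_add:
  assumes chi: "chi \<in> borel_measurable (restrict_space borel {0<..})" "bounded (chi ` {0<..})"
    and "x \<in> spec_cone chi" "y \<in> spec_cone chi"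
  shows "x + y \<in> spec_cone chi"
proof -
  obtain M N where M: "x = integral\<^sup>L M chi" "sets M = sets (restrict_space borel {0<..})" "finite_measure M"
    and N: "y = integral\<^sup>L N chi" "sets N = sets (restrict_space borel {0<..})" "finite_measure N"
    using assms(3,4) unfolding spec_cone_def by auto
  have "x + y = integral\<^sup>L (add_measure M N) chi"
    using M N integrable_spec_measure[OF chi] by (simp add: integral_add_measure)
  moreover have "finite_measure (add_measure M N)"
    using M N by (intro finite_measure_add_measure) auto
  ultimately show ?thesis
    using M unfolding spec_cone_def by auto
qed

lemma cone_spec_cone:
  assumes chi: "chi \<in> borel_measurable (restrict_space borel {0<..})"
  shows "cone (spec_cone chi)"
  unfolding cone_def
proof safe
  fix x and r :: real assume "x \<in> spec_cone chi" "0 \<le> r"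
  obtain N where N: "x = integral\<^sup>L N chi" "sets N = sets (restrict_space borel {0<..})" "finite_measure N"
    using \<open>x \<in> spec_cone chi\<close> unfolding spec_cone_def by auto
  let ?rN = "density N (\<lambda>_. ennreal r)"
  have "r *\<^sub>R x = integral\<^sup>L ?rN chi"
    using N chi \<open>0 \<le> r\<close> by (subst integral_density) (auto cong: measurable_cong_sets)
  moreover have "finite_measure ?rN"
    using finite_measure.emeasure_finite[OF N(3)]
    by (intro finite_measureI) (simp add: emeasure_density_const ennreal_mult_less_top less_top)
  ultimately show "r *\<^sub>R x \<in> spec_cone chi"
    using N unfolding spec_cone_def by auto
qed

lemma convex_spec_cone:
  assumes "chi \<in> borel_measurable (restrict_space borel {0<..})" "bounded (chi ` {0<..})"
  shows "convex (spec_cone chi)"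
  using assms cone_spec_cone[OF assms(1)] convex_cone[of "spec_cone chi"]
  by (auto simp: cone_def intro: spec_cone_add)

lemma spec_cone_inner_nonneg:
  assumes chi: "chi \<in> borel_measurable (restrict_space borel {0<..})" "bounded (chi ` {0<..})"
    and nonneg: "\<forall>l\<in>{0<..}. 0 \<le> w \<bullet> chi l"
    and "x \<in> spec_cone chi"
  shows "0 \<le> w \<bullet> x"
proof -
  obtain N where N: "x = integral\<^sup>L N chi" "sets N = sets (restrict_space borel {0<..})" "finite_measure N"
    using assms(4) unfolding spec_cone_def by auto
  have "space N = {0<..}"
    using sets_eq_imp_space_eq[OF N(2)] by (simp add: space_restrict_space)
  then have "0 \<le> (\<integral>l. w \<bullet> chi l \<partial>N)"
    using nonneg by (intro integral_nonneg_AE AE_I2) auto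
  then show ?thesis
    using N integrable_spec_measure[OF chi N(2,3)] by simp
qed

lemma affine_hull_cone_Int_hyperplane:
  fixes P :: "'a::euclidean_space set"
  assumes "cone P" and x: "x \<in> interior P" "0 < w \<bullet> x"
  shows "affine hull (P \<inter> {y. w \<bullet> y = 1}) = {y. w \<bullet> y = 1}"
proof -
  define \<sigma> where "\<sigma> = w \<bullet> x"
  have \<sigma>: "0 < \<sigma>" using x(2) by (simp add: \<sigma>_def)
  obtain e where e: "0 < e" "ball x e \<subseteq> P"
    using x(1) by (auto simp: mem_interior)
  have "ball ((1 / \<sigma>) *\<^sub>R x) (e / \<sigma>) \<subseteq> P"
  proof
    fix y assume "y \<in> ball ((1 / \<sigma>) *\<^sub>R x) (e / \<sigma>)"
    then have "\<sigma> * dist y ((1 / \<sigma>) *\<^sub>R x) < e"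
      using \<sigma> by (simp add: pos_less_divide_eq mult.commute dist_commute)
    moreover have "\<sigma> *\<^sub>R y - x = \<sigma> *\<^sub>R (y - (1 / \<sigma>) *\<^sub>R x)"
      using \<sigma> by (simp add: algebra_simps)
    ultimately have "dist (\<sigma> *\<^sub>R y) x < e"
      using \<sigma> by (simp add: dist_norm)
    then have "\<sigma> *\<^sub>R y \<in> ball x e"
      by (simp add: dist_commute)
    then have "(1 / \<sigma>) *\<^sub>R (\<sigma> *\<^sub>R y) \<in> P"
      using \<open>cone P\<close> \<sigma> e(2) unfolding cone_def by (meson less_eq_real_def subsetD zero_le_divide_1_iff)
    then show "y \<in> P" using \<sigma> by simp
  qed
  then have "(1 / \<sigma>) *\<^sub>R x \<in> {y. w \<bullet> y = 1} \<inter> interior P"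
    using \<sigma> e(1) by (auto simp: \<sigma>_def mem_interior intro!: exI[of _ "e / \<sigma>"])
  then have "affine hull ({y. w \<bullet> y = 1} \<inter> P) = affine hull {y. w \<bullet> y = 1}"
    by (intro affine_hull_affine_Int_nonempty_interior affine_hyperplane) blast
  then show ?thesis
    by (simp add: Int_commute affine_hull_eq affine_hyperplane)
qed

lemma planeA_hyperplane: "planeA = {x. one3 \<bullet> x = 1}"
  by (simp add: planeA_def inner_commute)

lemma one3_nonzero: "one3 \<noteq> 0"
  by (metis one3_def vec_component zero_index zero_neq_one)

lemma convex_Tset:
  assumes "chi \<in> borel_measurable (restrict_space borel {0<..})" "bounded (chi ` {0<..})"
  shows "convex (Tset chi)"
  unfolding Tset_def planeA_hyperplane
  by (intro convex_Int convex_spec_cone[OF assms] convex_hyperplane)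

lemma affine_hull_Tset:
  fixes chi :: "real \<Rightarrow> real^3"
  assumes chi: "chi \<in> borel_measurable (restrict_space borel {0<..})" "bounded (chi ` {0<..})"
    and nonneg: "\<forall>l\<in>{0<..}. \<forall>i. 0 \<le> chi l $ i"
    and "interior (spec_cone chi) \<noteq> {}"
  shows "affine hull (Tset chi) = planeA"
proof -
  obtain x where x: "x \<in> interior (spec_cone chi)"
    using assms(4) by blast
  have "\<forall>l\<in>{0<..}. 0 \<le> one3 \<bullet> chi l"
    using nonneg by (simp add: one3_def inner_vec_def sum_nonneg)
  then have "spec_cone chi \<subseteq> {y. 0 \<le> one3 \<bullet> y}"
    using spec_cone_inner_nonneg[OF chi] by blast
  then have "interior (spec_cone chi) \<subseteq> interior {y. 0 \<le> one3 \<bullet> y}"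
    by (rule interior_mono)
  also have "\<dots> = {y. 0 < one3 \<bullet> y}"
    using one3_nonzero by (rule interior_halfspace_ge)
  finally have "0 < one3 \<bullet> x" using x by blast
  then show ?thesis
    unfolding Tset_def planeA_hyperplane
    by (rule affine_hull_cone_Int_hyperplane[OF cone_spec_cone[OF chi(1)] x])
qed

lemma aff_dim_planeA: "aff_dim planeA = 2"
  by (simp add: planeA_hyperplane one3_nonzero)

section \<open>Relative interior and relative frontier\<close>

lemma interior_of_affine_hull: "top_of_set (affine hull S) interior_of S = rel_interior S"
  by (simp add: interior_of_def rel_interior_def)

lemma frontier_of_affine_hull:
  fixes S :: "'a::euclidean_space set"
  shows "top_of_set (affine hull S) frontier_of S = rel_frontier S"
proof -
  have "closure S \<subseteq> affine hull S"
    by (simp add: closure_minimal hull_subset)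
  then have "top_of_set (affine hull S) closure_of S = closure S"
    by (simp add: closure_of_subtopology euclidean_closure_of Int_absorb1 hull_subset Int_absorb1)
  then show ?thesis
    by (simp add: frontier_of_def rel_frontier_def interior_of_affine_hull)
qed

lemma rel_interior_not_subset_closed_segment:
  fixes S :: "'a::euclidean_space set"
  assumes "convex S" "2 \<le> aff_dim S"
  obtains c where "c \<in> rel_interior S" "c \<notin> closed_segment p q"
proof -
  have "\<not> rel_interior S \<subseteq> closed_segment p q"
  proof
    assume "rel_interior S \<subseteq> closed_segment p q"
    then have "aff_dim (rel_interior S) \<le> aff_dim {p, q}"
      by (metis aff_dim_subset aff_dim_convex_hull segment_convex_hull)
    then show False
      using assms by (simp add: rel_interior_aff_dim split: if_splits)
  qed
  then show ?thesis using that by blast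
qed

lemma rel_interior_shrink_towards:
  fixes S :: "'a::euclidean_space set"
  assumes "convex S" "c \<in> rel_interior S" "w \<in> closure S" "0 \<le> t" "t < 1"
  shows "c + t *\<^sub>R (w - c) \<in> rel_interior S"
  using rel_interior_closure_convex_shrink[OF assms(1-3), of "1 - t"] assms(4,5)
  by (simp add: algebra_simps)

lemma rel_frontier_ray_unique:
  fixes S :: "'a::euclidean_space set"
  assumes S: "convex S" "c \<in> rel_interior S"
    and y: "y \<in> rel_frontier S" and z: "z \<in> rel_frontier S"
    and r: "y - c = r *\<^sub>R (z - c)" "0 < r"
  shows "y = z"
proof -
  consider "r < 1" | "r = 1" | "1 < r" by linarith
  then show ?thesis
  proof cases
    case 1
    then have "c + r *\<^sub>R (z - c) \<in> rel_interior S"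
      using z r(2) by (intro rel_interior_shrink_towards[OF S]) (auto simp: rel_frontier_def)
    then show ?thesis using y r(1) by (metis DiffD2 add.commute diff_add_cancel rel_frontier_def)
  next
    case 3
    have "z - c = (1 / r) *\<^sub>R (y - c)" using r by simp
    moreover have "c + (1 / r) *\<^sub>R (y - c) \<in> rel_interior S"
      using y r(2) 3 by (intro rel_interior_shrink_towards[OF S]) (auto simp: rel_frontier_def)
    ultimately show ?thesis using z by (metis DiffD2 add.commute diff_add_cancel rel_frontier_def)
  qed (use r in simp)
qed

lemma rel_frontier_far_side:
  fixes S :: "'a::euclidean_space set"
  assumes S: "convex S" "c \<in> rel_interior S"
    and pq: "p \<in> closure S" "q \<in> closure S" and y: "y \<notin> rel_interior S"
    and lm: "0 \<le> l" "0 \<le> m" "y - c = l *\<^sub>R (p - c) + m *\<^sub>R (q - c)"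
  shows "1 \<le> l + m"
proof (rule ccontr)
  assume "\<not> 1 \<le> l + m"
  then have s: "0 \<le> l + m" "l + m < 1" using lm by auto
  show False
  proof (cases "l + m = 0")
    case True
    then have "l = 0" "m = 0" using lm by auto
    then show False using lm(3) S(2) y by simp
  next
    case False
    define w where "w = (l / (l + m)) *\<^sub>R p + (m / (l + m)) *\<^sub>R q"
    have "w \<in> closure S"
      unfolding w_def using lm s False
      by (intro convexD[OF convex_closure[OF S(1)] pq]) (auto simp: add_divide_distrib[symmetric])
    moreover have "(l + m) *\<^sub>R w = l *\<^sub>R p + m *\<^sub>R q"
      using False by (simp add: w_def scaleR_add_right)
    then have "y = c + (l + m) *\<^sub>R (w - c)"
      using lm(3) by (simp add: algebra_simps)
    ultimately show False
      using rel_interior_shrink_towards[OF S] s y by metis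
  qed
qed

lemma rel_frontier_near_side:
  fixes S :: "'a::euclidean_space set"
  assumes S: "convex S" "c \<in> rel_interior S"
    and p: "p \<notin> rel_interior S" and q: "q \<in> closure S" and y: "y \<in> closure S"
    and lm: "m \<le> 0" "y - c = l *\<^sub>R (p - c) + m *\<^sub>R (q - c)"
  shows "l + m \<le> 1"
proof (rule ccontr)
  assume "\<not> l + m \<le> 1"
  then have l: "1 - m < l" by simp
  define w where "w = (1 / (1 - m)) *\<^sub>R y + (- m / (1 - m)) *\<^sub>R q"
  have "w \<in> closure S"
    unfolding w_def using lm(1)
    by (intro convexD[OF convex_closure[OF S(1)] y q]) (auto simp: divide_simps)
  moreover have "p = c + ((1 - m) / l) *\<^sub>R (w - c)"
  proof -
    have "(1 - m) *\<^sub>R w = y - m *\<^sub>R q"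
      using lm(1) by (simp add: w_def scaleR_diff_right)
    have y_eq: "y = c + l *\<^sub>R (p - c) + m *\<^sub>R (q - c)"
      using lm(2) by (simp add: algebra_simps)
    have "(1 - m) *\<^sub>R (w - c) = (1 - m) *\<^sub>R w - (1 - m) *\<^sub>R c"
      by (rule scaleR_diff_right)
    also have "\<dots> = y - m *\<^sub>R q - (1 - m) *\<^sub>R c"
      using \<open>(1 - m) *\<^sub>R w = y - m *\<^sub>R q\<close> by simp
    also have "\<dots> = l *\<^sub>R (p - c)"
      unfolding y_eq by (simp add: algebra_simps)
    finally have "(1 - m) *\<^sub>R (w - c) = l *\<^sub>R (p - c)" .
    then have "((1 - m) / l) *\<^sub>R (w - c) = (1 / l) *\<^sub>R (l *\<^sub>R (p - c))"
      by (metis scaleR_scaleR times_divide_eq_left mult_1)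
    also have "\<dots> = p - c"
      using l lm(1) by simp
    finally show ?thesis by simp
  qed
  ultimately show False
    using rel_interior_shrink_towards[OF S, of w "(1 - m) / l"] lm(1) l p by simp
qed

section \<open>Affine coordinates\<close>

lemma convex_affine_coordinates_image:
  fixes c x y :: "'a::real_vector"
  assumes "convex K"
  shows "convex ((\<lambda>(l, m). c + l *\<^sub>R x + m *\<^sub>R y) ` K)"
proof -
  have "linear (\<lambda>(l :: real, m :: real). l *\<^sub>R x + m *\<^sub>R y)"
    by (rule linearI) (auto simp: algebra_simps)
  then have "convex ((+) c ` (\<lambda>(l, m). l *\<^sub>R x + m *\<^sub>R y) ` K)"
    by (intro convex_translation convex_linear_image assms)
  then show ?thesis
    by (simp add: image_image case_prod_beta add.assoc)
qed

lemma convex_quadrant_sum_ge: "convex {(l, m). 0 \<le> l \<and> 0 \<le> m \<and> 1 \<le> l + (m :: real)}"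
proof (rule convexI, clarsimp)
  fix l1 m1 l2 m2 u v :: real
  assume "0 \<le> u" "0 \<le> v" "u + v = 1" "1 \<le> l1 + m1" "1 \<le> l2 + m2"
  moreover have "u * 1 + v * 1 \<le> u * (l1 + m1) + v * (l2 + m2)"
    using calculation by (intro add_mono mult_left_mono) auto
  ultimately show "1 \<le> u * l1 + v * l2 + (u * m1 + v * m2)"
    by (simp add: algebra_simps)
qed

lemma convex_halfplane_sum_le: "convex {(l, m). l + (m :: real) \<le> 1}"
proof (rule convexI, clarsimp)
  fix l1 m1 l2 m2 u v :: real
  assume "0 \<le> u" "0 \<le> v" "u + v = 1" "l1 + m1 \<le> 1" "l2 + m2 \<le> 1"
  moreover have "u * (l1 + m1) + v * (l2 + m2) \<le> u * 1 + v * 1"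
    using calculation by (intro add_mono mult_left_mono) auto
  ultimately show "u * l1 + v * l2 + (u * m1 + v * m2) \<le> 1"
    by (simp add: algebra_simps)
qed

lemma convex_hull_Int_subset_closed_segment:
  fixes c p q :: "'a::real_vector"
  assumes indep: "\<And>l m. l *\<^sub>R (p - c) + m *\<^sub>R (q - c) = 0 \<Longrightarrow> l = 0 \<and> m = 0"
    and X: "\<forall>y\<in>X. \<exists>l m. 0 \<le> l \<and> 0 \<le> m \<and> 1 \<le> l + m \<and> y - c = l *\<^sub>R (p - c) + m *\<^sub>R (q - c)"
    and Y: "\<forall>y\<in>Y. \<exists>l m. l + m \<le> 1 \<and> y - c = l *\<^sub>R (p - c) + m *\<^sub>R (q - c)"
  shows "convex hull X \<inter> convex hull Y \<subseteq> closed_segment p q"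
proof -
  define f where "f = (\<lambda>(l, m). c + l *\<^sub>R (p - c) + m *\<^sub>R (q - c))"
  define K1 :: "(real \<times> real) set" where "K1 = {(l, m). 0 \<le> l \<and> 0 \<le> m \<and> 1 \<le> l + m}"
  define K2 :: "(real \<times> real) set" where "K2 = {(l, m). l + m \<le> 1}"
  have coords: "y - c = l *\<^sub>R (p - c) + m *\<^sub>R (q - c) \<longleftrightarrow> y = f (l, m)" for y l m
    by (auto simp: f_def algebra_simps)
  have "convex K1" "convex K2"
    unfolding K1_def K2_def by (rule convex_quadrant_sum_ge, rule convex_halfplane_sum_le)
  then have "convex (f ` K1)" "convex (f ` K2)"
    unfolding f_def by (simp_all add: convex_affine_coordinates_image)
  moreover have "X \<subseteq> f ` K1" "Y \<subseteq> f ` K2"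
    using X Y unfolding coords K1_def K2_def by auto
  ultimately have "convex hull X \<inter> convex hull Y \<subseteq> f ` K1 \<inter> f ` K2"
    by (meson Int_mono hull_minimal)
  also have "\<dots> \<subseteq> closed_segment p q"
  proof
    fix y assume "y \<in> f ` K1 \<inter> f ` K2"
    then obtain l1 m1 l2 m2 where 1: "(l1, m1) \<in> K1" "y = f (l1, m1)"
      and 2: "(l2, m2) \<in> K2" "y = f (l2, m2)" by auto
    have "(l1 - l2) *\<^sub>R (p - c) + (m1 - m2) *\<^sub>R (q - c) = 0"
      using 1(2) 2(2) by (simp add: f_def algebra_simps)
    then have "l1 = l2" "m1 = m2" using indep by force+
    then have "l1 = 1 - m1" "0 \<le> m1" "m1 \<le> 1" using 1(1) 2(1) by (auto simp: K1_def K2_def)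
    moreover have "y = (1 - m1) *\<^sub>R p + m1 *\<^sub>R q"
      using 1(2) \<open>l1 = 1 - m1\<close> by (simp add: f_def algebra_simps)
    ultimately show "y \<in> closed_segment p q"
      unfolding in_segment by blast
  qed
  finally show ?thesis .
qed

section \<open>Angular sectors\<close>

definition polar_dir :: "'a::real_vector \<Rightarrow> 'a \<Rightarrow> real \<Rightarrow> 'a" where
  "polar_dir u v t = cos t *\<^sub>R u + sin t *\<^sub>R v"

definition sector :: "'a::real_normed_vector \<Rightarrow> 'a \<Rightarrow> 'a \<Rightarrow> real set \<Rightarrow> 'a set" where
  "sector u v c I = {y. \<exists>t\<in>I. y - c = norm (y - c) *\<^sub>R polar_dir u v t}"

lemma polar_dir_add_2pi [simp]: "polar_dir u v (t + 2 * pi) = polar_dir u v t"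
  by (simp add: polar_dir_def)

lemma polar_dir_add_pi [simp]: "polar_dir u v (t + pi) = - polar_dir u v t"
  by (simp add: polar_dir_def)

lemma polar_dir_minus: "polar_dir u (- v) (- t) = polar_dir u v t"
  by (simp add: polar_dir_def)

lemma sector_add_2pi: "sector u v c {\<alpha> + 2 * pi..\<beta> + 2 * pi} = sector u v c {\<alpha>..\<beta>}"
proof -
  have "{\<alpha> + 2 * pi..\<beta> + 2 * pi} = (\<lambda>t. t + 2 * pi) ` {\<alpha>..\<beta>}" by simp
  then show ?thesis
    unfolding sector_def by (simp del: image_add_atLeastAtMost')
qed

lemma sin_diff_scaleR_polar_dir:
  "sin (\<beta> - \<alpha>) *\<^sub>R polar_dir u v t
     = sin (\<beta> - t) *\<^sub>R polar_dir u v \<alpha> + sin (t - \<alpha>) *\<^sub>R polar_dir u v \<beta>"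
proof -
  have "sin (\<beta> - \<alpha>) * cos t = sin (\<beta> - t) * cos \<alpha> + sin (t - \<alpha>) * cos \<beta>"
       "sin (\<beta> - \<alpha>) * sin t = sin (\<beta> - t) * sin \<alpha> + sin (t - \<alpha>) * sin \<beta>"
    by (simp_all add: sin_diff algebra_simps)
  then show ?thesis
    by (simp add: polar_dir_def scaleR_add_right algebra_simps flip: scaleR_add_left)
qed

lemma polar_dir_independent:
  fixes u v :: "'a::real_inner"
  assumes uv: "u \<bullet> u = 1" "v \<bullet> v = 1" "u \<bullet> v = 0"
    and s: "sin (\<beta> - \<alpha>) \<noteq> 0"
    and lm: "l *\<^sub>R polar_dir u v \<alpha> + m *\<^sub>R polar_dir u v \<beta> = 0"
  shows "l = 0 \<and> m = 0"
proof -
  have cos: "l * cos \<alpha> + m * cos \<beta> = 0" and sin: "l * sin \<alpha> + m * sin \<beta> = 0"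
    using arg_cong[OF lm, of "\<lambda>x. x \<bullet> u"] arg_cong[OF lm, of "\<lambda>x. x \<bullet> v"] uv
    by (simp_all add: polar_dir_def inner_add_left inner_commute[of v u])
  have "m * sin (\<beta> - \<alpha>) = cos \<alpha> * (l * sin \<alpha> + m * sin \<beta>) - sin \<alpha> * (l * cos \<alpha> + m * cos \<beta>)"
    by (simp add: sin_diff algebra_simps)
  then have "m = 0" using cos sin s by simp
  have "sin \<alpha> * (l * sin \<alpha>) + cos \<alpha> * (l * cos \<alpha>) = l * ((sin \<alpha>)\<^sup>2 + (cos \<alpha>)\<^sup>2)"
    by (simp only: power2_eq_square algebra_simps)
  then have "l = sin \<alpha> * (l * sin \<alpha>) + cos \<alpha> * (l * cos \<alpha>)"
    by simp
  also have "\<dots> = 0"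
    using cos sin \<open>m = 0\<close> by (simp only: mult_zero_left mult_zero_right add_0_right)
  finally show ?thesis
    using \<open>m = 0\<close> by simp
qed

lemma polar_frame_independent:
  fixes u v :: "'a::real_inner"
  assumes uv: "u \<bullet> u = 1" "v \<bullet> v = 1" "u \<bullet> v = 0" and s: "sin (\<beta> - \<alpha>) \<noteq> 0"
    and p: "p - c = ra *\<^sub>R polar_dir u v \<alpha>" and q: "q - c = rb *\<^sub>R polar_dir u v \<beta>"
    and "ra \<noteq> 0" "rb \<noteq> 0" "l *\<^sub>R (p - c) + m *\<^sub>R (q - c) = 0"
  shows "l = 0 \<and> m = 0"
proof -
  have "(l * ra) *\<^sub>R polar_dir u v \<alpha> + (m * rb) *\<^sub>R polar_dir u v \<beta> = 0"
    using assms(9) p q by simp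
  then have "l * ra = 0 \<and> m * rb = 0"
    by (rule polar_dir_independent[OF uv s])
  then show ?thesis
    using assms(7,8) by simp
qed

lemma polar_coordinates_in_frame:
  assumes s: "sin (\<beta> - \<alpha>) \<noteq> 0" and ra: "ra \<noteq> 0" and rb: "rb \<noteq> 0"
    and p: "p - c = ra *\<^sub>R polar_dir u v \<alpha>" and q: "q - c = rb *\<^sub>R polar_dir u v \<beta>"
    and y: "y - c = r *\<^sub>R polar_dir u v t"
  shows "y - c = (r * sin (\<beta> - t) / (ra * sin (\<beta> - \<alpha>))) *\<^sub>R (p - c)
                 + (r * sin (t - \<alpha>) / (rb * sin (\<beta> - \<alpha>))) *\<^sub>R (q - c)"
proof -
  have "y - c = (r / sin (\<beta> - \<alpha>)) *\<^sub>R (sin (\<beta> - \<alpha>) *\<^sub>R polar_dir u v t)"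
    using y s by simp
  also have "\<dots> = (r / sin (\<beta> - \<alpha>)) *\<^sub>R
      (sin (\<beta> - t) *\<^sub>R polar_dir u v \<alpha> + sin (t - \<alpha>) *\<^sub>R polar_dir u v \<beta>)"
    by (simp only: sin_diff_scaleR_polar_dir[of \<beta> \<alpha> u v t])
  also have "\<dots> = (r * sin (\<beta> - t) / (ra * sin (\<beta> - \<alpha>))) *\<^sub>R (ra *\<^sub>R polar_dir u v \<alpha>)
                 + (r * sin (t - \<alpha>) / (rb * sin (\<beta> - \<alpha>))) *\<^sub>R (rb *\<^sub>R polar_dir u v \<beta>)"
    using ra rb by (simp only: scaleR_add_right scaleR_scaleR) (simp add: field_simps)
  also have "\<dots> = (r * sin (\<beta> - t) / (ra * sin (\<beta> - \<alpha>))) *\<^sub>R (p - c)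
                 + (r * sin (t - \<alpha>) / (rb * sin (\<beta> - \<alpha>))) *\<^sub>R (q - c)"
    by (simp only: p q)
  finally show ?thesis .
qed

lemma centre_in_closed_segment_opposite:
  assumes "p \<in> sector u v c {\<alpha>}" "q \<in> sector u v c {\<alpha> + pi}" "p \<noteq> c" "q \<noteq> c"
  shows "c \<in> closed_segment p q"
proof -
  define ra where "ra = norm (p - c)"
  define rb where "rb = norm (q - c)"
  define t where "t = ra / (ra + rb)"
  have "0 < ra" "0 < rb"
    using assms(3,4) by (auto simp: ra_def rb_def)
  then have t: "0 \<le> t" "t \<le> 1" "(1 - t) * ra - t * rb = 0"
    by (auto simp: t_def field_simps)
  have pq: "p - c = ra *\<^sub>R polar_dir u v \<alpha>" "q - c = - rb *\<^sub>R polar_dir u v \<alpha>"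
    using assms(1,2) by (auto simp: ra_def rb_def sector_def)
  have "(1 - t) *\<^sub>R p + t *\<^sub>R q = c + (1 - t) *\<^sub>R (p - c) + t *\<^sub>R (q - c)"
    by (simp add: algebra_simps)
  also have "\<dots> = c + ((1 - t) * ra - t * rb) *\<^sub>R polar_dir u v \<alpha>"
    unfolding pq by (simp add: algebra_simps)
  finally show ?thesis
    using t unfolding in_segment by auto
qed

lemma sin_nonpos_pi_2pi: "pi \<le> x \<Longrightarrow> x \<le> 2 * pi \<Longrightarrow> sin x \<le> 0"
  using sin_ge_zero[of "x - pi"] by (simp add: sin_diff)

lemma sector_far_side:
  fixes S :: "'a::euclidean_space set"
  assumes S: "convex S" "c \<in> rel_interior S"
    and p: "p \<in> closure S" "p - c = ra *\<^sub>R polar_dir u v \<alpha>" "0 < ra"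
    and q: "q \<in> closure S" "q - c = rb *\<^sub>R polar_dir u v \<beta>" "0 < rb"
    and \<alpha>\<beta>: "\<alpha> < \<beta>" "\<beta> - \<alpha> < pi"
    and y: "y \<in> rel_frontier S" "y \<in> sector u v c {\<alpha>..\<beta>}"
  shows "\<exists>l m. 0 \<le> l \<and> 0 \<le> m \<and> 1 \<le> l + m \<and> y - c = l *\<^sub>R (p - c) + m *\<^sub>R (q - c)"
proof -
  obtain t where t: "\<alpha> \<le> t" "t \<le> \<beta>" "y - c = norm (y - c) *\<^sub>R polar_dir u v t"
    using y(2) by (auto simp: sector_def)
  have s: "0 < sin (\<beta> - \<alpha>)" using \<alpha>\<beta> by (simp add: sin_gt_zero)
  define l where "l = norm (y - c) * sin (\<beta> - t) / (ra * sin (\<beta> - \<alpha>))"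
  define m where "m = norm (y - c) * sin (t - \<alpha>) / (rb * sin (\<beta> - \<alpha>))"
  have lm: "y - c = l *\<^sub>R (p - c) + m *\<^sub>R (q - c)"
    unfolding l_def m_def using s p q t(3) by (intro polar_coordinates_in_frame) auto
  have "0 \<le> sin (\<beta> - t)" "0 \<le> sin (t - \<alpha>)"
    using t \<alpha>\<beta> by (auto intro!: sin_ge_zero)
  then have "0 \<le> l" "0 \<le> m"
    using s p(3) q(3) by (simp_all add: l_def m_def)
  moreover have "1 \<le> l + m"
    using rel_frontier_far_side[OF S p(1) q(1) _ \<open>0 \<le> l\<close> \<open>0 \<le> m\<close> lm] y(1)
    by (auto simp: rel_frontier_def)
  ultimately show ?thesis using lm by blast
qed

lemma sector_near_side:
  fixes S :: "'a::euclidean_space set"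
  assumes S: "convex S" "c \<in> rel_interior S"
    and p: "p \<in> rel_frontier S" "p - c = ra *\<^sub>R polar_dir u v \<alpha>" "0 < ra"
    and q: "q \<in> rel_frontier S" "q - c = rb *\<^sub>R polar_dir u v \<beta>" "0 < rb"
    and \<alpha>\<beta>: "\<alpha> < \<beta>" "\<beta> - \<alpha> < pi"
    and y: "y \<in> closure S" "y \<in> sector u v c {\<beta>..\<alpha> + 2 * pi}"
  shows "\<exists>l m. l + m \<le> 1 \<and> y - c = l *\<^sub>R (p - c) + m *\<^sub>R (q - c)"
proof -
  obtain t where t: "\<beta> \<le> t" "t \<le> \<alpha> + 2 * pi" "y - c = norm (y - c) *\<^sub>R polar_dir u v t"
    using y(2) by (auto simp: sector_def)
  have s: "0 < sin (\<beta> - \<alpha>)" using \<alpha>\<beta> by (simp add: sin_gt_zero)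
  define l where "l = norm (y - c) * sin (\<beta> - t) / (ra * sin (\<beta> - \<alpha>))"
  define m where "m = norm (y - c) * sin (t - \<alpha>) / (rb * sin (\<beta> - \<alpha>))"
  have lm: "y - c = l *\<^sub>R (p - c) + m *\<^sub>R (q - c)"
    unfolding l_def m_def using s p q t(3) by (intro polar_coordinates_in_frame) auto
  have "sin (\<beta> - t) \<le> 0 \<or> sin (t - \<alpha>) \<le> 0"
  proof (cases "pi \<le> t - \<alpha>")
    case True
    then show ?thesis using t by (simp add: sin_nonpos_pi_2pi)
  next
    case False
    have "sin (\<beta> - t) = - sin (t - \<beta>)"
      by (metis minus_diff_eq sin_minus)
    then show ?thesis using False t \<alpha>\<beta> sin_ge_zero[of "t - \<beta>"] by simp
  qed
  then have "l \<le> 0 \<or> m \<le> 0"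
    using s p(3) q(3) by (auto simp: l_def m_def divide_nonpos_pos mult_nonneg_nonpos)
  moreover have "l + m \<le> 1" if "m \<le> 0"
    using rel_frontier_near_side[OF S _ _ y(1) that lm] p(1) q(1) by (auto simp: rel_frontier_def)
  moreover have "l + m \<le> 1" if "l \<le> 0"
    using rel_frontier_near_side[OF S, where p = q and q = p and l = m and m = l] y(1) that lm p(1) q(1)
    by (auto simp: rel_frontier_def add.commute)
  ultimately show ?thesis using lm by blast
qed

lemma rel_frontier_Int_ray:
  fixes S :: "'a::euclidean_space set"
  assumes S: "convex S" "c \<in> rel_interior S"
    and p: "p \<in> rel_frontier S" "p \<in> sector u v c {\<alpha>}"
  shows "rel_frontier S \<inter> sector u v c {\<alpha>} = {p}"
proof -
  have "y = p" if y: "y \<in> rel_frontier S" "y - c = norm (y - c) *\<^sub>R polar_dir u v \<alpha>" for y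
  proof (rule rel_frontier_ray_unique[OF S y(1) p(1)])
    have off_centre: "0 < norm (z - c)" if "z \<in> rel_frontier S" for z
      using that S(2) by (auto simp: rel_frontier_def)
    have "p - c = norm (p - c) *\<^sub>R polar_dir u v \<alpha>"
      using p(2) by (simp add: sector_def)
    then have "(norm (y - c) / norm (p - c)) *\<^sub>R (p - c)
        = (norm (y - c) / norm (p - c) * norm (p - c)) *\<^sub>R polar_dir u v \<alpha>"
      by (metis scaleR_scaleR)
    also have "\<dots> = norm (y - c) *\<^sub>R polar_dir u v \<alpha>"
      using off_centre[OF p(1)] by simp
    finally show "y - c = (norm (y - c) / norm (p - c)) *\<^sub>R (p - c)"
      using y(2) by simp
    show "0 < norm (y - c) / norm (p - c)"
      using off_centre y(1) p(1) by simp
  qed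
  then show ?thesis
    using p unfolding sector_def by blast
qed

lemma convex_hull_sectors_Int_acute:
  fixes S :: "'a::euclidean_space set"
  assumes S: "convex S" "c \<in> rel_interior S"
    and uv: "u \<bullet> u = 1" "v \<bullet> v = 1" "u \<bullet> v = 0"
    and p: "p \<in> rel_frontier S" "p \<in> sector u v c {\<alpha>}"
    and q: "q \<in> rel_frontier S" "q \<in> sector u v c {\<beta>}"
    and \<alpha>\<beta>: "\<alpha> \<le> \<beta>" "\<beta> - \<alpha> < pi"
    and X: "X \<subseteq> rel_frontier S \<inter> sector u v c {\<alpha>..\<beta>}"
    and Y: "Y \<subseteq> rel_frontier S \<inter> sector u v c {\<beta>..\<alpha> + 2 * pi}"
  shows "convex hull X \<inter> convex hull Y \<subseteq> closed_segment p q"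
proof -
  have off_centre: "0 < norm (y - c)" if "y \<in> rel_frontier S" for y
    using that S(2) by (auto simp: rel_frontier_def)
  define ra where "ra = norm (p - c)"
  define rb where "rb = norm (q - c)"
  have ra: "p - c = ra *\<^sub>R polar_dir u v \<alpha>" "0 < ra"
    using p off_centre by (auto simp: ra_def sector_def)
  have rb: "q - c = rb *\<^sub>R polar_dir u v \<beta>" "0 < rb"
    using q off_centre by (auto simp: rb_def sector_def)
  show ?thesis
  proof (cases "\<alpha> = \<beta>")
    case True
    then have "X \<subseteq> {p}"
      using X rel_frontier_Int_ray[OF S p] by auto
    then have "convex hull X \<subseteq> {p}"
      by (metis convex_hull_singleton hull_mono)
    then show ?thesis by auto
  next
    case False
    then have \<alpha>\<beta>': "\<alpha> < \<beta>" using \<alpha>\<beta> by simp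
    have pq: "p \<in> closure S" "q \<in> closure S"
      using p(1) q(1) by (auto simp: rel_frontier_def)
    have s: "sin (\<beta> - \<alpha>) \<noteq> 0"
      using \<alpha>\<beta>' \<alpha>\<beta>(2) sin_gt_zero[of "\<beta> - \<alpha>"] by simp
    have "l = 0 \<and> m = 0" if "l *\<^sub>R (p - c) + m *\<^sub>R (q - c) = 0" for l m
      using polar_frame_independent[OF uv s ra(1) rb(1)] ra(2) rb(2) that by simp
    moreover have "\<forall>y\<in>X. \<exists>l m. 0 \<le> l \<and> 0 \<le> m \<and> 1 \<le> l + m \<and> y - c = l *\<^sub>R (p - c) + m *\<^sub>R (q - c)"
      using X by (intro ballI sector_far_side[OF S pq(1) ra pq(2) rb \<alpha>\<beta>' \<alpha>\<beta>(2)]) auto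
    moreover have "\<forall>y\<in>Y. \<exists>l m. l + m \<le> 1 \<and> y - c = l *\<^sub>R (p - c) + m *\<^sub>R (q - c)"
      using Y by (intro ballI sector_near_side[OF S p(1) ra q(1) rb \<alpha>\<beta>' \<alpha>\<beta>(2)])
        (auto simp: rel_frontier_def)
    ultimately show ?thesis
      by (rule convex_hull_Int_subset_closed_segment)
  qed
qed

lemma convex_hull_sectors_Int:
  fixes S :: "'a::euclidean_space set"
  assumes S: "convex S" "c \<in> rel_interior S" "c \<notin> closed_segment p q"
    and uv: "u \<bullet> u = 1" "v \<bullet> v = 1" "u \<bullet> v = 0"
    and p: "p \<in> rel_frontier S" "p \<in> sector u v c {\<alpha>}"
    and q: "q \<in> rel_frontier S" "q \<in> sector u v c {\<beta>}"
    and \<alpha>\<beta>: "\<alpha> \<le> \<beta>" "\<beta> \<le> \<alpha> + 2 * pi"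
    and X: "X \<subseteq> rel_frontier S \<inter> sector u v c {\<alpha>..\<beta>}"
    and Y: "Y \<subseteq> rel_frontier S \<inter> sector u v c {\<beta>..\<alpha> + 2 * pi}"
  shows "convex hull X \<inter> convex hull Y \<subseteq> closed_segment p q"
proof -
  consider "\<beta> - \<alpha> < pi" | "\<beta> = \<alpha> + pi" | "pi < \<beta> - \<alpha>" by linarith
  then show ?thesis
  proof cases
    case 1
    then show ?thesis by (rule convex_hull_sectors_Int_acute[OF S(1,2) uv p q \<alpha>\<beta>(1) _ X Y])
  next
    case 2
    have "p \<noteq> c" "q \<noteq> c"
      using p(1) q(1) S(2) by (auto simp: rel_frontier_def)
    then show ?thesis
      using centre_in_closed_segment_opposite[of p u v c \<alpha> q] p(2) q(2) S(3) 2 by simp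
  next
    case 3
    \<comment> \<open>Exchanging the two arcs replaces the angle \<open>\<beta> - \<alpha> > pi\<close> by \<open>\<alpha> + 2 pi - \<beta> < pi\<close>.\<close>
    have p': "p \<in> sector u v c {\<alpha> + 2 * pi}"
      using p(2) sector_add_2pi[of u v c \<alpha> \<alpha>] by simp
    have X': "X \<subseteq> rel_frontier S \<inter> sector u v c {\<alpha> + 2 * pi..\<beta> + 2 * pi}"
      using X sector_add_2pi[of u v c \<alpha> \<beta>] by simp
    have "convex hull Y \<inter> convex hull X \<subseteq> closed_segment q p"
      by (rule convex_hull_sectors_Int_acute[OF S(1,2) uv q p(1) p' _ _ Y X']) (use \<alpha>\<beta> 3 in auto)
    then show ?thesis by (simp add: closed_segment_commute Int_commute)
  qed
qed

section \<open>Complementary arcs of the spectral locus\<close>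

lemma arcs_in_sectors:
  fixes \<eta> :: "real \<Rightarrow> 'a::real_normed_vector" and \<theta> :: "real \<Rightarrow> real"
  assumes mono: "\<forall>x\<in>{0..1}. \<forall>y\<in>{0..1}. x \<le> y \<longrightarrow> \<theta> x \<le> \<theta> y"
    and total: "\<theta> 1 - \<theta> 0 \<le> 2 * pi"
    and polar: "\<forall>l\<in>{0..1}. \<eta> l - c = norm (\<eta> l - c) *\<^sub>R polar_dir u v (\<theta> l)"
    and ab: "0 \<le> a" "a \<le> b" "b \<le> 1"
  shows "\<eta> ` {a..b} \<subseteq> sector u v c {\<theta> a..\<theta> b}"
    and "\<eta> ` ({b..1} \<union> {0..a}) \<subseteq> sector u v c {\<theta> b..\<theta> a + 2 * pi}"
proof -
  have le: "\<theta> x \<le> \<theta> y" if "0 \<le> x" "x \<le> y" "y \<le> 1" for x y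
    using that by (intro mono[rule_format]) auto
  have polar': "\<eta> l \<in> sector u v c I" if "l \<in> {0..1}" "\<theta> l \<in> I" for l I
    using polar that by (auto simp: sector_def)
  show "\<eta> ` {a..b} \<subseteq> sector u v c {\<theta> a..\<theta> b}"
    using ab le by (auto intro!: polar')
  show "\<eta> ` ({b..1} \<union> {0..a}) \<subseteq> sector u v c {\<theta> b..\<theta> a + 2 * pi}"
  proof clarify
    fix l assume l: "l \<in> {b..1} \<union> {0..a}"
    then have l01: "l \<in> {0..1}" using ab by auto
    show "\<eta> l \<in> sector u v c {\<theta> b..\<theta> a + 2 * pi}"
    proof (cases "b \<le> l")
      case True
      then have "\<theta> l \<in> {\<theta> b..\<theta> a + 2 * pi}"
        using le[of b l] le[of l 1] le[of 0 a] l01 ab total by auto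
      then show ?thesis using l01 polar' by blast
    next
      case False
      then have "\<theta> l + 2 * pi \<in> {\<theta> b..\<theta> a + 2 * pi}"
        using le[of b 1] le[of 0 l] le[of l a] l l01 ab total by auto
      moreover have "\<eta> l - c = norm (\<eta> l - c) *\<^sub>R polar_dir u v (\<theta> l + 2 * pi)"
        using polar l01 by simp
      ultimately show ?thesis unfolding sector_def by blast
    qed
  qed
qed

lemma convex_hull_arcs_Int_mono:
  fixes \<eta> :: "real \<Rightarrow> 'a::euclidean_space" and \<theta> :: "real \<Rightarrow> real"
  assumes S: "convex S" "c \<in> rel_interior S" "c \<notin> closed_segment (\<eta> a) (\<eta> b)"
    and uv: "u \<bullet> u = 1" "v \<bullet> v = 1" "u \<bullet> v = 0"
    and frontier: "\<eta> ` {0..1} \<subseteq> rel_frontier S"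
    and polar: "\<forall>l\<in>{0..1}. \<eta> l - c = norm (\<eta> l - c) *\<^sub>R polar_dir u v (\<theta> l)"
    and mono: "\<forall>x\<in>{0..1}. \<forall>y\<in>{0..1}. x \<le> y \<longrightarrow> \<theta> x \<le> \<theta> y"
    and total: "\<theta> 1 - \<theta> 0 \<le> 2 * pi"
    and ab: "0 \<le> a" "a \<le> b" "b \<le> 1"
  shows "convex hull (\<eta> ` {a..b}) \<inter> convex hull (\<eta> ` ({b..1} \<union> {0..a}))
           \<subseteq> closed_segment (\<eta> a) (\<eta> b)"
proof (rule convex_hull_sectors_Int[OF S uv])
  have a01: "a \<in> {0..1}" and b01: "b \<in> {0..1}" using ab by auto
  show "\<eta> a \<in> rel_frontier S" "\<eta> b \<in> rel_frontier S"
    using frontier a01 b01 by auto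
  show "\<eta> a \<in> sector u v c {\<theta> a}" "\<eta> b \<in> sector u v c {\<theta> b}"
    using polar a01 b01 by (auto simp: sector_def)
  show "\<theta> a \<le> \<theta> b" "\<theta> b \<le> \<theta> a + 2 * pi"
    using mono[rule_format, of a b] mono[rule_format, of b 1] mono[rule_format, of 0 a] ab total
    by auto
  show "\<eta> ` {a..b} \<subseteq> rel_frontier S \<inter> sector u v c {\<theta> a..\<theta> b}"
    "\<eta> ` ({b..1} \<union> {0..a}) \<subseteq> rel_frontier S \<inter> sector u v c {\<theta> b..\<theta> a + 2 * pi}"
    using arcs_in_sectors[OF mono total polar ab] frontier ab by auto
qed

lemma convex_hull_arcs_Int:
  fixes \<eta> :: "real \<Rightarrow> 'a::euclidean_space" and \<theta> :: "real \<Rightarrow> real"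
  assumes S: "convex S" "c \<in> rel_interior S" "c \<notin> closed_segment (\<eta> a) (\<eta> b)"
    and uv: "u \<bullet> u = 1" "v \<bullet> v = 1" "u \<bullet> v = 0"
    and frontier: "\<eta> ` {0..1} \<subseteq> rel_frontier S"
    and polar: "\<forall>l\<in>{0..1}. \<eta> l - c = norm (\<eta> l - c) *\<^sub>R polar_dir u v (\<theta> l)"
    and mono: "(\<forall>x\<in>{0..1}. \<forall>y\<in>{0..1}. x \<le> y \<longrightarrow> \<theta> x \<le> \<theta> y) \<or>
               (\<forall>x\<in>{0..1}. \<forall>y\<in>{0..1}. x \<le> y \<longrightarrow> \<theta> y \<le> \<theta> x)"
    and total: "\<bar>\<theta> 0 - \<theta> 1\<bar> \<le> 2 * pi"
    and ab: "0 \<le> a" "a \<le> b" "b \<le> 1"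
  shows "convex hull (\<eta> ` {a..b}) \<inter> convex hull (\<eta> ` ({b..1} \<union> {0..a}))
           \<subseteq> closed_segment (\<eta> a) (\<eta> b)"
  using mono
proof
  assume "\<forall>x\<in>{0..1}. \<forall>y\<in>{0..1}. x \<le> y \<longrightarrow> \<theta> x \<le> \<theta> y"
  then show ?thesis
    using convex_hull_arcs_Int_mono[OF S uv frontier polar _ _ ab] total by simp
next
  assume "\<forall>x\<in>{0..1}. \<forall>y\<in>{0..1}. x \<le> y \<longrightarrow> \<theta> y \<le> \<theta> x"
  moreover have "\<forall>l\<in>{0..1}. \<eta> l - c = norm (\<eta> l - c) *\<^sub>R polar_dir u (- v) (- \<theta> l)"
    using polar by (simp add: polar_dir_minus)
  ultimately show ?thesis
    using convex_hull_arcs_Int_mono[OF S, of u "- v" "\<lambda>l. - \<theta> l"] uv frontier total ab by auto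
qed

lemma e1_e2_orthonormal: "e1 \<bullet> e1 = 1" "e2 \<bullet> e2 = 1" "e1 \<bullet> e2 = 0"
  by (simp_all add: e1_def e2_def inner_vec_def sum_3 power2_eq_square)

lemma convex_locus_convex_hull_arcs_Int:
  fixes \<eta> :: "real \<Rightarrow> real^3"
  assumes T: "convex T" "affine hull T = planeA" and locus: "convex_locus \<eta> T"
    and ab: "0 \<le> a" "a \<le> b" "b \<le> 1"
  shows "convex hull (\<eta> ` {a..b}) \<inter> convex hull (\<eta> ` ({b..1} \<union> {0..a}))
           \<subseteq> closed_segment (\<eta> a) (\<eta> b)"
proof -
  obtain c where c: "c \<in> rel_interior T" "c \<notin> closed_segment (\<eta> a) (\<eta> b)"
    using rel_interior_not_subset_closed_segment[OF T(1)] T(2) aff_dim_planeA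
    by (metis aff_dim_affine_hull order_refl)
  have frontier: "\<eta> ` {0..1} \<subseteq> rel_frontier T"
    using locus T(2) unfolding convex_locus_def by (metis frontier_of_affine_hull)
  have "c \<in> top_of_set planeA interior_of T"
    using c(1) T(2) by (metis interior_of_affine_hull)
  then obtain \<theta> where
    "\<forall>l\<in>{0..1}. \<eta> l - c = norm (\<eta> l - c) *\<^sub>R polar_dir e1 e2 (\<theta> l)"
    "(\<forall>x\<in>{0..1}. \<forall>y\<in>{0..1}. x \<le> y \<longrightarrow> \<theta> x \<le> \<theta> y) \<or>
     (\<forall>x\<in>{0..1}. \<forall>y\<in>{0..1}. x \<le> y \<longrightarrow> \<theta> y \<le> \<theta> x)"
    "\<bar>\<theta> 0 - \<theta> 1\<bar> \<le> 2 * pi"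
    using locus unfolding convex_locus_def polar_dir_def by blast
  then show ?thesis
    by (rule convex_hull_arcs_Int[OF T(1) c e1_e2_orthonormal frontier _ _ _ ab])
qed

theorem lemma3:
  fixes chi \<eta> :: "real \<Rightarrow> real^3" and a b :: real
  assumes chi_cont: "continuous_on {0<..} chi"
    and chi_bdd: "bounded (chi ` {0<..})"
    and chi_nonneg: "\<forall>l\<in>{0<..}. \<forall>i. 0 \<le> chi l $ i"
    and chi_supp: "closure {l \<in> {0<..}. chi l \<noteq> 0} = {0..1}"
    and chi_nz: "\<forall>l\<in>{0<..<1}. chi l \<noteq> 0"
    and eta_def: "\<forall>l\<in>{0<..<1}. \<eta> l = (1 / (one3 \<bullet> chi l)) *\<^sub>R chi l"
    and eta_cont: "continuous_on {0..1} \<eta>"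
    and P_int: "interior (spec_cone chi) \<noteq> {}"
    and convex: "convex_locus \<eta> (Tset chi)"
    and ab: "0 \<le> a" "a < b" "b \<le> 1"
  shows "convex hull (\<eta> ` cyc_interval a b) \<inter> convex hull (\<eta> ` cyc_interval b a)
           = closed_segment (\<eta> a) (\<eta> b)"
proof -
  have chi: "chi \<in> borel_measurable (restrict_space borel {0<..})"
    by (rule borel_measurable_continuous_on_restrict[OF chi_cont])
  have T: "convex (Tset chi)" "affine hull (Tset chi) = planeA"
    by (rule convex_Tset[OF chi chi_bdd], rule affine_hull_Tset[OF chi chi_bdd chi_nonneg P_int])
  have "{\<eta> a, \<eta> b} \<subseteq> \<eta> ` {a..b}" "{\<eta> a, \<eta> b} \<subseteq> \<eta> ` ({b..1} \<union> {0..a})"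
    using ab by auto
  then have "closed_segment (\<eta> a) (\<eta> b)
      \<subseteq> convex hull (\<eta> ` {a..b}) \<inter> convex hull (\<eta> ` ({b..1} \<union> {0..a}))"
    by (simp add: segment_convex_hull hull_mono)
  moreover have "convex hull (\<eta> ` {a..b}) \<inter> convex hull (\<eta> ` ({b..1} \<union> {0..a}))
      \<subseteq> closed_segment (\<eta> a) (\<eta> b)"
    using convex_locus_convex_hull_arcs_Int[OF T convex] ab by simp
  ultimately show ?thesis
    using ab by (auto simp: cyc_interval_def)
qed

end
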